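(* Let $B:[0,1]\to\{0,1\}$ be the Bernoulli channel. For every $\lambda_1,\lambda_2>0$ with $\lambda_1+\lambda_2<1$, \[ \frac14\le\dot{C}_{\mathrm{DI}}(B)\le\limsup_{n\to\infty}\frac{1}{n\log n}\log N_{\mathrm{DI}}(n,\lambda_1,\lambda_2)\le\frac12. \]
   Context: The Bernoulli channel maps $x\in[0,1]$ to the distribution $B_x$ on $\{0,1\}$ with $B_x(1)=x$, $B_x(0)=1-x$; for $x^n\in[0,1]^n$, $B_{x^n}(y^n)=\prod_iB_{x_i}(y_i)$. An $(n,N,\lambda_1,\lambda_2)$-DI code is a family $\{(u_j,\mathcal{E}_j):j\in[N]\}$, $u_j\in[0,1]^n$, $\mathcal{E}_j\subset\{0,1\}^n$, with $B_{u_j}(\mathcal{E}_j)\ge1-\lambda_1$ for all $j$ and $B_{u_j}(\mathcal{E}_k)\le\lambda_2$ for $j\ne k$; $N_{\mathrm{DI}}(n,\lambda_1,\lambda_2)$ is the largest such $N$. Logarithms base 2; $\dot{C}_{\mathrm{DI}}(B)=\inf_{\lambda_1,\lambda_2>0}\liminf_{n\to\infty}\frac{1}{n\log n}\log N_{\mathrm{DI}}(n,\lambda_1,\lambda_2)$. *)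

theory Defs
  imports Complex_Main "HOL-Library.Extended_Real"
begin

text \<open>Output words y^n in {0,1}^n are boolean lists of length n (True = 1).
  An input word x^n in [0,1]^n is a function u :: nat => real, used on indices i < n.\<close>

definition bern_word :: "nat \<Rightarrow> (nat \<Rightarrow> real) \<Rightarrow> bool list \<Rightarrow> real" where
  "bern_word n u y = (\<Prod>i<n. if y ! i then u i else 1 - u i)"

definition bern_prob :: "nat \<Rightarrow> (nat \<Rightarrow> real) \<Rightarrow> bool list set \<Rightarrow> real" where
  "bern_prob n u E = (\<Sum>y\<in>E. bern_word n u y)"

definition is_DI_code ::
  "nat \<Rightarrow> nat \<Rightarrow> real \<Rightarrow> real \<Rightarrow> (nat \<Rightarrow> nat \<Rightarrow> real) \<Rightarrow> (nat \<Rightarrow> bool list set) \<Rightarrow> bool" where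
  "is_DI_code n N l1 l2 u E \<longleftrightarrow>
     (\<forall>j<N. (\<forall>i<n. 0 \<le> u j i \<and> u j i \<le> 1) \<and> E j \<subseteq> {y. length y = n}
            \<and> bern_prob n (u j) (E j) \<ge> 1 - l1) \<and>
     (\<forall>j<N. \<forall>k<N. j \<noteq> k \<longrightarrow> bern_prob n (u j) (E k) \<le> l2)"

definition N_DI :: "nat \<Rightarrow> real \<Rightarrow> real \<Rightarrow> enat" where
  "N_DI n l1 l2 = Sup {enat N | N. \<exists>u E. is_DI_code n N l1 l2 u E}"

definition DI_rate :: "real \<Rightarrow> real \<Rightarrow> nat \<Rightarrow> ereal" where
  "DI_rate l1 l2 n = (case N_DI n l1 l2 of
       enat N \<Rightarrow> ereal (log 2 (real N) / (real n * log 2 (real n)))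
     | \<infinity> \<Rightarrow> \<infinity>)"

definition C_DI_dot :: ereal where
  "C_DI_dot = (INF l1\<in>{0<..}. INF l2\<in>{0<..}. liminf (DI_rate l1 l2))"

end

(*
  Write x = sin^2 (theta x).  The Bhattacharyya coefficient of B_x and B_x' is
  cos (theta x - theta x'), and it is multiplicative over coordinates.  Two codewords of a code
  with errors l1, l2 are at total variation distance at least 1 - l1 - l2, so their coefficient is
  at most 1 - (1 - l1 - l2)^2 / 8.  Codewords whose angles lie in the same cell of width pi / (2 K)
  in every coordinate have coefficient at least 1 - n pi^2 / (8 K^2).  For K ~ sqrt n the cell
  pattern therefore determines the codeword, and N <= (K + 1)^n = 2^((1/2 + o(1)) n log n).

  By Gilbert-Varshamov there are many words in {0..m}^n at pairwise Hamming
  distance at least h, and by pigeonhole many of them share the same squared norm.  Scaled by 1/m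
  they become inputs with equal norms and pairwise squared distance at least D = h / m^2, decoded
  by thresholding <u_j, y> at |u_j|^2 - D/4; Chebyshev bounds both error probabilities by
  4 n / D^2.  Taking m ~ n^(1/4) / ln n and h ~ m^2 sqrt n = o(n) gives
  log N >= (1/4 - o(1)) n log n.
*)
theory Submission
  imports Defs "HOL-Analysis.Analysis" "HOL-Real_Asymp.Real_Asymp"
begin

abbreviation words :: "nat \<Rightarrow> bool list set" where
  "words n \<equiv> {y. length y = n}"

lemma finite_words [simp]: "finite (words n)"
  by (rule finite_subset[OF _ finite_lists_length_eq[of UNIV n]]) auto

lemma sum_words_Suc:
  "(\<Sum>y\<in>words (Suc n). f y) = (\<Sum>y\<in>words n. f (y @ [True]) + f (y @ [False]))"
proof -
  have words_Suc: "words (Suc n) = (\<lambda>(y, b). y @ [b]) ` (words n \<times> UNIV)"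
  proof (rule set_eqI, rule iffI)
    fix x :: "bool list" assume "x \<in> words (Suc n)"
    then have "x = butlast x @ [last x]" and "length (butlast x) = n"
      by (auto intro: append_butlast_last_id[symmetric])
    then show "x \<in> (\<lambda>(y, b). y @ [b]) ` (words n \<times> UNIV)" by force
  qed auto
  have "inj_on (\<lambda>(y, b). y @ [b]) (words n \<times> (UNIV :: bool set))"
    by (auto simp: inj_on_def)
  then have "(\<Sum>y\<in>words (Suc n). f y) = (\<Sum>(y, b)\<in>words n \<times> UNIV. f (y @ [b]))"
    unfolding words_Suc by (simp add: sum.reindex case_prod_unfold)
  also have "\<dots> = (\<Sum>y\<in>words n. f (y @ [True]) + f (y @ [False]))"
    by (simp add: sum.cartesian_product[symmetric] UNIV_bool add.commute)
  finally show ?thesis .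
qed

lemma bern_word_snoc:
  "length y = n \<Longrightarrow> bern_word (Suc n) u (y @ [b]) = bern_word n u y * (if b then u n else 1 - u n)"
  unfolding bern_word_def by (simp add: nth_append)

lemma bern_word_nonneg: "\<forall>i<n. 0 \<le> u i \<and> u i \<le> 1 \<Longrightarrow> 0 \<le> bern_word n u y"
  unfolding bern_word_def by (intro prod_nonneg) auto

lemma sum_bern_word: "(\<Sum>y\<in>words n. bern_word n u y) = 1"
proof (induction n)
  case 0
  then show ?case by (simp add: bern_word_def)
next
  case (Suc n)
  have "(\<Sum>y\<in>words (Suc n). bern_word (Suc n) u y) = (\<Sum>y\<in>words n. bern_word n u y)"
    unfolding sum_words_Suc by (rule sum.cong) (auto simp: bern_word_snoc algebra_simps)
  then show ?case using Suc by simp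
qed

lemma bern_prob_mono:
  assumes "\<forall>i<n. 0 \<le> u i \<and> u i \<le> 1" "A \<subseteq> B" "finite B"
  shows "bern_prob n u A \<le> bern_prob n u B"
  unfolding bern_prob_def by (rule sum_mono2) (use assms bern_word_nonneg in auto)

lemma bern_prob_complement:
  assumes "E \<subseteq> words n"
  shows "bern_prob n u (words n - E) = 1 - bern_prob n u E"
  using sum.subset_diff[OF assms finite_words, of "bern_word n u"]
  by (simp add: bern_prob_def sum_bern_word)

definition dot_word :: "(nat \<Rightarrow> real) \<Rightarrow> nat \<Rightarrow> bool list \<Rightarrow> real" where
  "dot_word a n y = (\<Sum>i<n. if y ! i then a i else 0)"

lemma dot_word_snoc:
  "length y = n \<Longrightarrow> dot_word a (Suc n) (y @ [b]) = dot_word a n y + (if b then a n else 0)"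
  unfolding dot_word_def by (simp add: nth_append)

lemma bern_variance_dot_word:
  "(\<Sum>y\<in>words n. bern_word n u y * (dot_word a n y - (\<Sum>i<n. a i * u i))\<^sup>2)
     = (\<Sum>i<n. (a i)\<^sup>2 * (u i * (1 - u i)))"
proof (induction n)
  case 0
  then show ?case by (simp add: bern_word_def dot_word_def)
next
  case (Suc n)
  let ?dev = "\<lambda>y. dot_word a n y - (\<Sum>i<n. a i * u i)"
  let ?var = "(a n)\<^sup>2 * (u n * (1 - u n))"
  have "(\<Sum>y\<in>words (Suc n). bern_word (Suc n) u y * (dot_word a (Suc n) y - (\<Sum>i<Suc n. a i * u i))\<^sup>2)
      = (\<Sum>y\<in>words n. bern_word n u y * (?dev y)\<^sup>2 + bern_word n u y * ?var)"
    unfolding sum_words_Suc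
    by (rule sum.cong) (auto simp: bern_word_snoc dot_word_snoc power2_eq_square algebra_simps)
  also have "\<dots> = (\<Sum>i<n. (a i)\<^sup>2 * (u i * (1 - u i))) + ?var"
    by (simp add: sum.distrib Suc.IH sum_distrib_right[symmetric] sum_bern_word)
  finally show ?case by simp
qed

lemma sum_tail_le_second_moment:
  fixes p T :: "'a \<Rightarrow> real"
  assumes "finite Y" "\<And>y. y \<in> Y \<Longrightarrow> 0 \<le> p y" "t > 0"
  shows "(\<Sum>y\<in>{y\<in>Y. t \<le> \<bar>T y\<bar>}. p y) \<le> (\<Sum>y\<in>Y. p y * (T y)\<^sup>2) / t\<^sup>2"
proof -
  have "(\<Sum>y\<in>{y\<in>Y. t \<le> \<bar>T y\<bar>}. p y) \<le> (\<Sum>y\<in>{y\<in>Y. t \<le> \<bar>T y\<bar>}. p y * (T y)\<^sup>2 / t\<^sup>2)"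
  proof (rule sum_mono)
    fix y assume y: "y \<in> {y\<in>Y. t \<le> \<bar>T y\<bar>}"
    then have "t\<^sup>2 \<le> (T y)\<^sup>2"
      using assms(3) by (metis (mono_tags) abs_of_pos mem_Collect_eq abs_le_square_iff)
    then have "1 \<le> (T y)\<^sup>2 / t\<^sup>2" using assms(3) by simp
    then show "p y \<le> p y * (T y)\<^sup>2 / t\<^sup>2"
      using assms(2) y mult_left_mono[of 1 "(T y)\<^sup>2 / t\<^sup>2" "p y"] by simp
  qed
  also have "\<dots> \<le> (\<Sum>y\<in>Y. p y * (T y)\<^sup>2 / t\<^sup>2)"
    by (rule sum_mono2) (use assms in auto)
  finally show ?thesis by (simp add: sum_divide_distrib)
qed

lemma bern_prob_deviation_le:
  assumes u: "\<forall>i<n. 0 \<le> u i \<and> u i \<le> 1" and a: "\<forall>i<n. \<bar>a i\<bar> \<le> 1" and "D > 0"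
  shows "bern_prob n u {y\<in>words n. D \<le> \<bar>dot_word a n y - (\<Sum>i<n. a i * u i)\<bar>} \<le> real n / (4 * D\<^sup>2)"
proof -
  have "bern_prob n u {y\<in>words n. D \<le> \<bar>dot_word a n y - (\<Sum>i<n. a i * u i)\<bar>}
      \<le> (\<Sum>i<n. (a i)\<^sup>2 * (u i * (1 - u i))) / D\<^sup>2"
    unfolding bern_prob_def bern_variance_dot_word[symmetric]
    by (rule sum_tail_le_second_moment) (use bern_word_nonneg[OF u] \<open>D > 0\<close> in auto)
  also have "(\<Sum>i<n. (a i)\<^sup>2 * (u i * (1 - u i))) \<le> (\<Sum>i<n. 1 / 4)"
  proof (rule sum_mono)
    fix i assume "i \<in> {..<n}"
    then have "(a i)\<^sup>2 \<le> 1" "0 \<le> u i * (1 - u i)" using a u by (auto simp: abs_square_le_1)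
    moreover have "u i * (1 - u i) \<le> 1 / 4"
      using zero_le_power2[of "u i - 1 / 2"] by (simp add: power2_eq_square algebra_simps)
    ultimately show "(a i)\<^sup>2 * (u i * (1 - u i)) \<le> 1 / 4"
      using mult_mono[of "(a i)\<^sup>2" 1 "u i * (1 - u i)" "1 / 4"] by simp
  qed
  finally show ?thesis using \<open>D > 0\<close> by (simp add: divide_right_mono field_simps)
qed

lemma sum_abs_diff_sq_le_bhattacharyya:
  fixes p q :: "'a \<Rightarrow> real"
  assumes "\<And>y. y \<in> Y \<Longrightarrow> 0 \<le> p y" "\<And>y. y \<in> Y \<Longrightarrow> 0 \<le> q y" "sum p Y = 1" "sum q Y = 1"
  shows "(\<Sum>y\<in>Y. \<bar>p y - q y\<bar>)\<^sup>2 \<le> 8 * (1 - (\<Sum>y\<in>Y. sqrt (p y * q y)))"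
proof -
  define S where "S = (\<Sum>y\<in>Y. sqrt (p y * q y))"
  have "(\<Sum>y\<in>Y. \<bar>p y - q y\<bar>) = (\<Sum>y\<in>Y. \<bar>sqrt (p y) - sqrt (q y)\<bar> * (sqrt (p y) + sqrt (q y)))"
  proof (rule sum.cong)
    fix y assume "y \<in> Y"
    then have "p y - q y = (sqrt (p y) - sqrt (q y)) * (sqrt (p y) + sqrt (q y))"
      using assms by (simp add: algebra_simps)
    then show "\<bar>p y - q y\<bar> = \<bar>sqrt (p y) - sqrt (q y)\<bar> * (sqrt (p y) + sqrt (q y))"
      using assms \<open>y \<in> Y\<close> by (simp add: abs_mult)
  qed simp
  then have "(\<Sum>y\<in>Y. \<bar>p y - q y\<bar>)\<^sup>2
      \<le> (\<Sum>y\<in>Y. (sqrt (p y) - sqrt (q y))\<^sup>2) * (\<Sum>y\<in>Y. (sqrt (p y) + sqrt (q y))\<^sup>2)"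
    using Cauchy_Schwarz_ineq_sum[of "\<lambda>y. \<bar>sqrt (p y) - sqrt (q y)\<bar>"] by simp
  also have "(\<Sum>y\<in>Y. (sqrt (p y) - sqrt (q y))\<^sup>2) = 2 - 2 * S"
  proof -
    have "(\<Sum>y\<in>Y. (sqrt (p y) - sqrt (q y))\<^sup>2) = (\<Sum>y\<in>Y. p y + q y - 2 * sqrt (p y * q y))"
      using assms by (intro sum.cong) (auto simp: power2_diff real_sqrt_mult)
    then show ?thesis using assms by (simp add: S_def sum.distrib sum_subtractf sum_distrib_left)
  qed
  also have "(\<Sum>y\<in>Y. (sqrt (p y) + sqrt (q y))\<^sup>2) \<le> (\<Sum>y\<in>Y. 2 * (p y + q y))"
  proof (rule sum_mono)
    fix y assume "y \<in> Y"
    then show "(sqrt (p y) + sqrt (q y))\<^sup>2 \<le> 2 * (p y + q y)"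
      using assms zero_le_power2[of "sqrt (p y) - sqrt (q y)"]
      by (simp add: power2_sum power2_diff)
  qed
  also have "(\<Sum>y\<in>Y. 2 * (p y + q y)) = 4"
    using assms by (simp add: sum_distrib_left[symmetric] sum.distrib)
  finally show ?thesis
    using \<open>(\<Sum>y\<in>Y. (sqrt (p y) - sqrt (q y))\<^sup>2) = 2 - 2 * S\<close> sum_nonneg[of Y "\<lambda>y. (sqrt (p y) - sqrt (q y))\<^sup>2"]
    by (simp add: S_def mult_left_mono)
qed

lemma sum_sqrt_bern_word:
  "(\<Sum>y\<in>words n. sqrt (bern_word n u y * bern_word n w y))
     = (\<Prod>i<n. sqrt (u i * w i) + sqrt ((1 - u i) * (1 - w i)))"
proof (induction n)
  case 0
  then show ?case by (simp add: bern_word_def)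
next
  case (Suc n)
  have "(\<Sum>y\<in>words (Suc n). sqrt (bern_word (Suc n) u y * bern_word (Suc n) w y))
     = (\<Sum>y\<in>words n. sqrt (bern_word n u y * bern_word n w y)
                       * (sqrt (u n * w n) + sqrt ((1 - u n) * (1 - w n))))"
    unfolding sum_words_Suc
    by (rule sum.cong) (auto simp: bern_word_snoc algebra_simps real_sqrt_mult[symmetric])
  then show ?case using Suc by (simp add: sum_distrib_right[symmetric])
qed

definition bern_angle :: "real \<Rightarrow> real" where
  "bern_angle x = arcsin (sqrt x)"

lemma bern_angle_bounds:
  assumes "0 \<le> x" "x \<le> 1"
  shows "0 \<le> bern_angle x \<and> bern_angle x \<le> pi / 2"
proof -
  have "0 \<le> sqrt x" "sqrt x \<le> 1" using assms by simp_all
  then have "-1 \<le> sqrt x" "sqrt x \<le> 1" by linarith+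
  then show ?thesis
    unfolding bern_angle_def using assms arcsin_nonneg[of "sqrt x"] arcsin_ubound by auto
qed

lemma bhattacharyya_eq_cos_bern_angle_diff:
  assumes "0 \<le> x" "x \<le> 1" "0 \<le> x'" "x' \<le> 1"
  shows "sqrt (x * x') + sqrt ((1 - x) * (1 - x')) = cos (bern_angle x - bern_angle x')"
proof -
  have sin: "sin (bern_angle z) = sqrt z" and cos: "cos (bern_angle z) = sqrt (1 - z)"
    if "0 \<le> z" "z \<le> 1" for z
  proof -
    have "0 \<le> sqrt z" "sqrt z \<le> 1" using that by simp_all
    then have "-1 \<le> sqrt z" "sqrt z \<le> 1" by linarith+
    then show "sin (bern_angle z) = sqrt z" "cos (bern_angle z) = sqrt (1 - z)"
      using that by (simp_all add: bern_angle_def cos_arcsin)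
  qed
  show ?thesis using assms by (simp add: cos_diff sin cos real_sqrt_mult)
qed

lemma bern_prob_diff_sq_le:
  assumes u: "\<forall>i<n. 0 \<le> u i \<and> u i \<le> 1" and w: "\<forall>i<n. 0 \<le> w i \<and> w i \<le> 1"
    and E: "E \<subseteq> words n"
  shows "(bern_prob n u E - bern_prob n w E)\<^sup>2
           \<le> 8 * (1 - (\<Prod>i<n. cos (bern_angle (u i) - bern_angle (w i))))"
proof -
  have "\<bar>bern_prob n u E - bern_prob n w E\<bar> \<le> (\<Sum>y\<in>E. \<bar>bern_word n u y - bern_word n w y\<bar>)"
    unfolding bern_prob_def sum_subtractf[symmetric] by (rule sum_abs)
  also have "\<dots> \<le> (\<Sum>y\<in>words n. \<bar>bern_word n u y - bern_word n w y\<bar>)"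
    by (rule sum_mono2) (use E in auto)
  finally have "(bern_prob n u E - bern_prob n w E)\<^sup>2 \<le> (\<Sum>y\<in>words n. \<bar>bern_word n u y - bern_word n w y\<bar>)\<^sup>2"
    by (metis abs_ge_zero power2_abs power_mono)
  also have "\<dots> \<le> 8 * (1 - (\<Sum>y\<in>words n. sqrt (bern_word n u y * bern_word n w y)))"
    by (rule sum_abs_diff_sq_le_bhattacharyya) (simp_all add: bern_word_nonneg u w sum_bern_word)
  also have "(\<Sum>y\<in>words n. sqrt (bern_word n u y * bern_word n w y))
      = (\<Prod>i<n. cos (bern_angle (u i) - bern_angle (w i)))"
    unfolding sum_sqrt_bern_word using u w by (intro prod.cong) (auto simp: bhattacharyya_eq_cos_bern_angle_diff)
  finally show ?thesis .
qed

lemma DI_code_angle_separation: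
  assumes code: "is_DI_code n N l1 l2 u E" and "l1 + l2 \<le> 1" and "j < N" "k < N" "j \<noteq> k"
  shows "(1 - l1 - l2)\<^sup>2 \<le> 8 * (1 - (\<Prod>i<n. cos (bern_angle (u j i) - bern_angle (u k i))))"
proof -
  have "1 - l1 \<le> bern_prob n (u j) (E j)" "bern_prob n (u k) (E j) \<le> l2"
    and u: "\<forall>i<n. 0 \<le> u j i \<and> u j i \<le> 1" "\<forall>i<n. 0 \<le> u k i \<and> u k i \<le> 1"
    and E: "E j \<subseteq> words n"
    using code assms(3-5) unfolding is_DI_code_def by auto
  then have "(1 - l1 - l2)\<^sup>2 \<le> (bern_prob n (u j) (E j) - bern_prob n (u k) (E j))\<^sup>2"
    using \<open>l1 + l2 \<le> 1\<close> by (intro power_mono) auto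
  also have "\<dots> \<le> 8 * (1 - (\<Prod>i<n. cos (bern_angle (u j i) - bern_angle (u k i))))"
    by (rule bern_prob_diff_sq_le[OF u E])
  finally show ?thesis .
qed

lemma one_minus_cos_le: "1 - cos z \<le> (z::real)\<^sup>2 / 2"
proof -
  have "1 - cos z = 2 * (sin (z / 2))\<^sup>2"
    using cos_double_sin[of "z / 2"] by simp
  also have "(sin (z / 2))\<^sup>2 \<le> (z / 2)\<^sup>2"
    using abs_sin_x_le_abs_x[of "z / 2"] by (metis abs_ge_zero power2_abs power_mono)
  finally show ?thesis by (simp add: power_divide)
qed

definition angle_cell :: "nat \<Rightarrow> real \<Rightarrow> nat" where
  "angle_cell K x = nat \<lfloor>bern_angle x * (2 * real K / pi)\<rfloor>"

lemma angle_cell_le: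
  assumes "0 \<le> x" "x \<le> 1"
  shows "angle_cell K x \<le> K"
proof -
  have "bern_angle x * (2 * real K / pi) \<le> pi / 2 * (2 * real K / pi)"
    using bern_angle_bounds[OF assms] by (intro mult_right_mono) auto
  then show ?thesis unfolding angle_cell_def by simp linarith
qed

lemma cos_bern_angle_diff_ge:
  assumes "0 \<le> x" "x \<le> 1" "0 \<le> x'" "x' \<le> 1" "K > 0" "angle_cell K x = angle_cell K x'"
  shows "1 - pi\<^sup>2 / (8 * (real K)\<^sup>2) \<le> cos (bern_angle x - bern_angle x')"
proof -
  define a where "a = bern_angle x * (2 * real K / pi)"
  define a' where "a' = bern_angle x' * (2 * real K / pi)"
  have "0 \<le> a" "0 \<le> a'"
    using bern_angle_bounds assms by (auto simp: a_def a'_def)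
  then have "\<lfloor>a\<rfloor> = \<lfloor>a'\<rfloor>"
    using assms(6) unfolding angle_cell_def a_def[symmetric] a'_def[symmetric] by (simp add: nat_eq_iff2)
  then have "\<bar>a - a'\<bar> < 1" by linarith
  moreover have "a - a' = (bern_angle x - bern_angle x') * (2 * real K / pi)"
    by (simp only: a_def a'_def left_diff_distrib)
  ultimately have "\<bar>bern_angle x - bern_angle x'\<bar> * (2 * real K / pi) < 1"
    by (simp add: abs_mult)
  then have "\<bar>bern_angle x - bern_angle x'\<bar> \<le> pi / (2 * real K)"
    using \<open>K > 0\<close> by (simp add: field_simps)
  then have "(bern_angle x - bern_angle x')\<^sup>2 \<le> (pi / (2 * real K))\<^sup>2"
    by (metis abs_ge_zero power2_abs power_mono)
  then show ?thesis
    using one_minus_cos_le[of "bern_angle x - bern_angle x'"] by (simp add: power_divide)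
qed

lemma prod_cos_bern_angle_diff_ge:
  assumes x: "\<forall>i<n. 0 \<le> x i \<and> x i \<le> 1" and x': "\<forall>i<n. 0 \<le> x' i \<and> x' i \<le> 1" and "K > 0"
    and cells: "\<forall>i<n. angle_cell K (x i) = angle_cell K (x' i)"
  shows "1 - real n * pi\<^sup>2 / (8 * (real K)\<^sup>2) \<le> (\<Prod>i<n. cos (bern_angle (x i) - bern_angle (x' i)))"
proof -
  let ?c = "\<lambda>i. cos (bern_angle (x i) - bern_angle (x' i))"
  have c: "1 - pi\<^sup>2 / (8 * (real K)\<^sup>2) \<le> ?c i \<and> 0 \<le> ?c i" if "i < n" for i
    using that x x' cells cos_bern_angle_diff_ge[OF _ _ _ _ \<open>K > 0\<close>]
      bern_angle_bounds[of "x i"] bern_angle_bounds[of "x' i"]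
    by (auto intro!: cos_ge_zero)
  have "1 - ?c i \<le> pi\<^sup>2 / (8 * (real K)\<^sup>2)" if "i < n" for i
    using c[OF that] by linarith
  then have "(\<Sum>i<n. 1 - ?c i) \<le> (\<Sum>i<n. pi\<^sup>2 / (8 * (real K)\<^sup>2))"
    by (intro sum_mono) simp
  then have "1 - real n * pi\<^sup>2 / (8 * (real K)\<^sup>2) \<le> 1 - (\<Sum>i<n. 1 - ?c i)"
    by simp
  also have "\<dots> \<le> (\<Prod>i<n. 1 - (1 - ?c i))"
    by (rule Weierstrass_prod_ineq) (use c in auto)
  finally show ?thesis by simp
qed

lemma DI_code_card_le:
  assumes code: "is_DI_code n N l1 l2 u E" and "l1 + l2 < 1" and "K > 0"
    and K: "real n * pi\<^sup>2 < (1 - l1 - l2)\<^sup>2 * (real K)\<^sup>2"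
  shows "N \<le> (K + 1) ^ n"
proof -
  define cells where "cells j = (\<lambda>i\<in>{..<n}. angle_cell K (u j i))" for j
  have u: "\<forall>i<n. 0 \<le> u j i \<and> u j i \<le> 1" if "j < N" for j
    using code that unfolding is_DI_code_def by blast
  have "inj_on cells {..<N}"
  proof (rule inj_onI, rule ccontr)
    fix j k assume "j \<in> {..<N}" "k \<in> {..<N}" "cells j = cells k" "j \<noteq> k"
    then have cells: "\<forall>i<n. angle_cell K (u j i) = angle_cell K (u k i)"
      by (metis cells_def lessThan_iff restrict_apply')
    define P where "P = (\<Prod>i<n. cos (bern_angle (u j i) - bern_angle (u k i)))"
    define e where "e = real n * pi\<^sup>2 / (8 * (real K)\<^sup>2)"
    have "1 - e \<le> P"
      unfolding P_def e_def
      using prod_cos_bern_angle_diff_ge u \<open>j \<in> {..<N}\<close> \<open>k \<in> {..<N}\<close> \<open>K > 0\<close> cells by blast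
    moreover have "(1 - l1 - l2)\<^sup>2 \<le> 8 * (1 - P)"
      unfolding P_def using DI_code_angle_separation code \<open>l1 + l2 < 1\<close> \<open>j \<in> {..<N}\<close> \<open>k \<in> {..<N}\<close> \<open>j \<noteq> k\<close>
      by fastforce
    ultimately have "(1 - l1 - l2)\<^sup>2 \<le> 8 * e"
      by argo
    then have "(1 - l1 - l2)\<^sup>2 * (real K)\<^sup>2 \<le> real n * pi\<^sup>2"
      using \<open>K > 0\<close> by (simp add: e_def field_simps)
    then show False using K by simp
  qed
  moreover have "cells j \<in> PiE {..<n} (\<lambda>_. {..K})" if "j < N" for j
    unfolding cells_def restrict_PiE_iff using u[OF that] angle_cell_le by auto
  then have "cells ` {..<N} \<subseteq> PiE {..<n} (\<lambda>_. {..K})" by auto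
  ultimately have "N \<le> card (PiE {..<n} (\<lambda>_. {..K}))"
    using card_inj_on_le[of cells "{..<N}"] by (simp add: finite_PiE)
  then show ?thesis by (simp add: card_PiE)
qed

lemma exists_independent_subset:
  assumes "finite X" and sym: "\<And>x y. R x y \<Longrightarrow> R y x" and refl: "\<And>x. x \<in> X \<Longrightarrow> R x x"
    and deg: "\<And>x. x \<in> X \<Longrightarrow> card {y\<in>X. R x y} \<le> B"
  shows "\<exists>S\<subseteq>X. (\<forall>x\<in>S. \<forall>y\<in>S. x \<noteq> y \<longrightarrow> \<not> R x y) \<and> card X \<le> card S * B"
proof -
  let ?indep = "\<lambda>S. S \<subseteq> X \<and> (\<forall>x\<in>S. \<forall>y\<in>S. x \<noteq> y \<longrightarrow> \<not> R x y)"
  have "\<forall>T. ?indep T \<longrightarrow> card T < Suc (card X)"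
    using \<open>finite X\<close> by (auto simp: less_Suc_eq_le intro: card_mono)
  from ex_has_greatest_nat[of ?indep "{}", OF _ this]
  obtain S where S: "?indep S" and max: "\<And>T. ?indep T \<Longrightarrow> card T \<le> card S"
    by auto
  have "finite S" using S \<open>finite X\<close> finite_subset by blast
  have "X \<subseteq> (\<Union>s\<in>S. {y\<in>X. R s y})"
  proof
    fix x assume x: "x \<in> X"
    show "x \<in> (\<Union>s\<in>S. {y\<in>X. R s y})"
    proof (rule ccontr)
      assume far: "x \<notin> (\<Union>s\<in>S. {y\<in>X. R s y})"
      then have "x \<notin> S" using x refl by blast
      moreover have "?indep (insert x S)" using S x far sym by blast
      ultimately show False using max[of "insert x S"] \<open>finite S\<close> by simp
    qed
  qed
  then have "card X \<le> card (\<Union>s\<in>S. {y\<in>X. R s y})"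
    using \<open>finite S\<close> \<open>finite X\<close> by (intro card_mono) auto
  also have "\<dots> \<le> (\<Sum>s\<in>S. card {y\<in>X. R s y})"
    by (rule card_UN_le[OF \<open>finite S\<close>])
  also have "\<dots> \<le> card S * B"
  proof -
    have "card {y\<in>X. R s y} \<le> B" if "s \<in> S" for s using that S deg by blast
    then show ?thesis using sum_bounded_above[of S "\<lambda>s. card {y\<in>X. R s y}" B] by simp
  qed
  finally have "card X \<le> card S * B" .
  with S show ?thesis by (intro exI[of _ S]) simp
qed

definition hamming :: "nat \<Rightarrow> (nat \<Rightarrow> 'a) \<Rightarrow> (nat \<Rightarrow> 'a) \<Rightarrow> nat" where
  "hamming n v w = card {i\<in>{..<n}. v i \<noteq> w i}"

lemma hamming_commute: "hamming n v w = hamming n w v"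
  unfolding hamming_def by (rule arg_cong[where f = card]) auto

lemma card_PiE_agree_outside_le:
  assumes "finite A" "finite D" "D \<subseteq> I"
  shows "card {w\<in>PiE I (\<lambda>_. A). \<forall>i\<in>I - D. w i = v i} \<le> card A ^ card D"
proof -
  let ?F = "{w\<in>PiE I (\<lambda>_. A). \<forall>i\<in>I - D. w i = v i}"
  have "inj_on (\<lambda>w. restrict w D) ?F"
  proof (rule inj_onI, rule ext)
    fix w w' i assume w: "w \<in> ?F" and w': "w' \<in> ?F" and eq: "restrict w D = restrict w' D"
    show "w i = w' i"
    proof (cases "i \<in> D")
      case True
      then show ?thesis using fun_cong[OF eq, of i] by simp
    next
      case False
      show ?thesis
      proof (cases "i \<in> I")
        case True
        then show ?thesis using w w' \<open>i \<notin> D\<close> by simp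
      next
        case False
        have "w \<in> PiE I (\<lambda>_. A)" "w' \<in> PiE I (\<lambda>_. A)" using w w' by simp_all
        then show ?thesis using PiE_arb False by metis
      qed
    qed
  qed
  moreover have "(\<lambda>w. restrict w D) ` ?F \<subseteq> PiE D (\<lambda>_. A)"
    using assms(3) by (auto simp: PiE_iff)
  ultimately have "card ?F \<le> card (PiE D (\<lambda>_. A))"
    using assms by (intro card_inj_on_le) (auto simp: finite_PiE)
  then show ?thesis using assms by (simp add: card_PiE)
qed

lemma card_hamming_ball_le:
  assumes "finite A" "A \<noteq> {}"
  shows "card {w\<in>PiE {..<n} (\<lambda>_. A). hamming n v w < h} \<le> 2 ^ n * card A ^ h"
proof -
  let ?X = "PiE {..<n} (\<lambda>_. A)"
  let ?I = "{D. D \<subseteq> {..<n} \<and> card D < h}"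
  let ?F = "\<lambda>D. {w\<in>?X. \<forall>i\<in>{..<n} - D. w i = v i}"
  have "{w\<in>?X. hamming n v w < h} \<subseteq> (\<Union>D\<in>?I. ?F D)"
  proof
    fix w assume w: "w \<in> {w\<in>?X. hamming n v w < h}"
    then have "{i\<in>{..<n}. v i \<noteq> w i} \<in> ?I" and "w \<in> ?F {i\<in>{..<n}. v i \<noteq> w i}"
      by (auto simp: hamming_def)
    then show "w \<in> (\<Union>D\<in>?I. ?F D)" by blast
  qed
  then have "card {w\<in>?X. hamming n v w < h} \<le> card (\<Union>D\<in>?I. ?F D)"
    using assms by (intro card_mono) (auto simp: finite_PiE)
  also have "\<dots> \<le> (\<Sum>D\<in>?I. card (?F D))" by (rule card_UN_le) simp
  also have "\<dots> \<le> (\<Sum>D\<in>?I. card A ^ h)"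
  proof (rule sum_mono)
    fix D assume D: "D \<in> ?I"
    then have "finite D" using finite_subset by blast
    then have "card (?F D) \<le> card A ^ card D"
      using D assms by (intro card_PiE_agree_outside_le) auto
    also have "\<dots> \<le> card A ^ h"
      using D assms by (intro power_increasing) (auto simp: Suc_le_eq card_gt_0_iff)
    finally show "card (?F D) \<le> card A ^ h" .
  qed
  also have "\<dots> = card ?I * card A ^ h"
    by simp
  also have "\<dots> \<le> card (Pow {..<n}) * card A ^ h"
    by (intro mult_right_mono card_mono) auto
  finally show ?thesis by (simp add: card_Pow)
qed

lemma hamming_le_sum_sq_diff:
  fixes v w :: "nat \<Rightarrow> nat"
  shows "real (hamming n v w) \<le> (\<Sum>i<n. (real (v i) - real (w i))\<^sup>2)"
proof -
  have "real (hamming n v w) = (\<Sum>i\<in>{i\<in>{..<n}. v i \<noteq> w i}. 1)"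
    by (simp add: hamming_def)
  also have "\<dots> \<le> (\<Sum>i\<in>{i\<in>{..<n}. v i \<noteq> w i}. (real (v i) - real (w i))\<^sup>2)"
  proof (rule sum_mono)
    fix i assume "i \<in> {i\<in>{..<n}. v i \<noteq> w i}"
    then have "1 \<le> \<bar>real (v i) - real (w i)\<bar>" by auto
    then show "1 \<le> (real (v i) - real (w i))\<^sup>2" by (simp add: abs_le_square_iff[of 1, simplified])
  qed
  also have "\<dots> \<le> (\<Sum>i<n. (real (v i) - real (w i))\<^sup>2)"
    by (rule sum_mono2) auto
  finally show ?thesis .
qed

lemma gilbert_varshamov:
  assumes "finite A" "A \<noteq> {}" "1 \<le> h"
  obtains S where "S \<subseteq> PiE {..<n} (\<lambda>_. A)"
    and "\<And>v w. v \<in> S \<Longrightarrow> w \<in> S \<Longrightarrow> v \<noteq> w \<Longrightarrow> h \<le> hamming n v w"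
    and "card A ^ n \<le> card S * (2 ^ n * card A ^ h)"
proof -
  let ?X = "PiE {..<n} (\<lambda>_. A)"
  let ?close = "\<lambda>v w. hamming n v w < h"
  have "\<exists>S\<subseteq>?X. (\<forall>v\<in>S. \<forall>w\<in>S. v \<noteq> w \<longrightarrow> \<not> ?close v w) \<and> card ?X \<le> card S * (2 ^ n * card A ^ h)"
  proof (rule exists_independent_subset)
    show "finite ?X" using assms by (simp add: finite_PiE)
    show "?close w v" if "?close v w" for v w :: "nat \<Rightarrow> 'a" using that by (simp add: hamming_commute)
    show "?close v v" for v :: "nat \<Rightarrow> 'a" using assms by (simp add: hamming_def)
    show "card {w\<in>?X. ?close v w} \<le> 2 ^ n * card A ^ h" for v
      by (rule card_hamming_ball_le[OF assms(1,2)])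
  qed
  then obtain S where S: "S \<subseteq> ?X" and dist: "\<forall>v\<in>S. \<forall>w\<in>S. v \<noteq> w \<longrightarrow> h \<le> hamming n v w"
    and card_S: "card A ^ n \<le> card S * (2 ^ n * card A ^ h)"
    by (auto simp: card_PiE not_less)
  show ?thesis by (rule that[OF S _ card_S]) (use dist in auto)
qed

lemma exists_equal_norm_hamming_code:
  fixes n m h :: nat
  assumes "1 \<le> h"
  obtains C where "C \<subseteq> PiE {..<n} (\<lambda>_. {..m})"
    and "\<And>v w. v \<in> C \<Longrightarrow> w \<in> C \<Longrightarrow> v \<noteq> w \<Longrightarrow> h \<le> hamming n v w"
    and "\<And>v w. v \<in> C \<Longrightarrow> w \<in> C \<Longrightarrow> (\<Sum>i<n. (v i)\<^sup>2) = (\<Sum>i<n. (w i)\<^sup>2)"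
    and "(m + 1) ^ n \<le> card C * (2 ^ n * (m + 1) ^ h) * (n * m\<^sup>2 + 1)"
proof -
  obtain S where S: "S \<subseteq> PiE {..<n} (\<lambda>_. {..m})"
    and dist: "\<And>v w. v \<in> S \<Longrightarrow> w \<in> S \<Longrightarrow> v \<noteq> w \<Longrightarrow> h \<le> hamming n v w"
    and card_S: "(m + 1) ^ n \<le> card S * (2 ^ n * (m + 1) ^ h)"
    using gilbert_varshamov[of "{..m}" h n] assms by auto
  let ?sq = "\<lambda>v. \<Sum>i<n. (v i)\<^sup>2"
  have "?sq v \<le> n * m\<^sup>2" if "v \<in> S" for v
  proof -
    have "?sq v \<le> (\<Sum>i<n. m\<^sup>2)"
      using that S by (intro sum_mono power_mono) (auto simp: PiE_iff)
    then show ?thesis by simp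
  qed
  then obtain t where t: "card S \<le> card (?sq -` {t} \<inter> S) * (n * m\<^sup>2 + 1)"
    using pigeonhole_card[of ?sq S "{..n * m\<^sup>2}"] finite_subset[OF S] by (auto simp: finite_PiE)
  show ?thesis
  proof (rule that[of "?sq -` {t} \<inter> S"])
    have "(m + 1) ^ n \<le> card S * (2 ^ n * (m + 1) ^ h)" by (rule card_S)
    also have "\<dots> \<le> card (?sq -` {t} \<inter> S) * (n * m\<^sup>2 + 1) * (2 ^ n * (m + 1) ^ h)"
      by (rule mult_right_mono[OF t]) simp
    finally show "(m + 1) ^ n \<le> card (?sq -` {t} \<inter> S) * (2 ^ n * (m + 1) ^ h) * (n * m\<^sup>2 + 1)"
      by (simp only: mult_ac)
  qed (use S dist in auto)
qed

(* Equal norms put the mean <u_k, u_j> of the statistic of message k under the input u_j at least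
   D/2 below |u_k|^2, so both kinds of error are deviations of size D/4. *)
lemma threshold_DI_code:
  fixes u :: "nat \<Rightarrow> nat \<Rightarrow> real" and D :: real
  assumes u: "\<And>j. j < N \<Longrightarrow> \<forall>i<n. 0 \<le> u j i \<and> u j i \<le> 1"
    and norm: "\<And>j k. j < N \<Longrightarrow> k < N \<Longrightarrow> (\<Sum>i<n. (u j i)\<^sup>2) = (\<Sum>i<n. (u k i)\<^sup>2)"
    and sep: "\<And>j k. j < N \<Longrightarrow> k < N \<Longrightarrow> j \<noteq> k \<Longrightarrow> D \<le> (\<Sum>i<n. (u j i - u k i)\<^sup>2)"
    and "D > 0" and l1: "4 * real n \<le> l1 * D\<^sup>2" and l2: "4 * real n \<le> l2 * D\<^sup>2"
  shows "is_DI_code n N l1 l2 u (\<lambda>j. {y\<in>words n. (\<Sum>i<n. (u j i)\<^sup>2) - D / 4 \<le> dot_word (u j) n y})"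
proof -
  let ?nrm = "\<lambda>j. \<Sum>i<n. (u j i)\<^sup>2"
  let ?E = "\<lambda>j. {y\<in>words n. ?nrm j - D / 4 \<le> dot_word (u j) n y}"
  let ?far = "\<lambda>j k. {y\<in>words n. D / 4 \<le> \<bar>dot_word (u k) n y - (\<Sum>i<n. u k i * u j i)\<bar>}"
  have abs_u: "\<forall>i<n. \<bar>u j i\<bar> \<le> 1" if "j < N" for j using u[OF that] by auto
  have far: "bern_prob n (u j) (?far j k) \<le> 4 * real n / D\<^sup>2" if "j < N" "k < N" for j k
  proof -
    have "bern_prob n (u j) (?far j k) \<le> real n / (4 * (D / 4)\<^sup>2)"
      by (rule bern_prob_deviation_le[OF u[OF that(1)] abs_u[OF that(2)]]) (use \<open>D > 0\<close> in simp)
    also have "\<dots> = 4 * real n / D\<^sup>2" by (simp add: power_divide)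
    finally show ?thesis .
  qed
  have own: "1 - l1 \<le> bern_prob n (u j) (?E j)" if j: "j < N" for j
  proof -
    have "(\<Sum>i<n. u j i * u j i) = ?nrm j" by (simp add: power2_eq_square)
    then have "words n - ?E j \<subseteq> ?far j j" by (auto simp: abs_if)
    then have "bern_prob n (u j) (words n - ?E j) \<le> bern_prob n (u j) (?far j j)"
      by (intro bern_prob_mono[OF u[OF j]]) auto
    also have "\<dots> \<le> 4 * real n / D\<^sup>2" by (rule far[OF j j])
    also have "\<dots> \<le> l1" using l1 \<open>D > 0\<close> by (simp add: divide_le_eq)
    finally have "bern_prob n (u j) (words n - ?E j) \<le> l1" .
    moreover have "bern_prob n (u j) (words n - ?E j) = 1 - bern_prob n (u j) (?E j)"
      by (rule bern_prob_complement) auto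
    ultimately show ?thesis by linarith
  qed
  have cross: "bern_prob n (u j) (?E k) \<le> l2" if jk: "j < N" "k < N" "j \<noteq> k" for j k
  proof -
    have "D \<le> ?nrm j + ?nrm k - 2 * (\<Sum>i<n. u k i * u j i)"
      using sep[OF jk]
      by (simp add: power2_diff sum.distrib sum_subtractf sum_distrib_left algebra_simps)
    then have "(\<Sum>i<n. u k i * u j i) \<le> ?nrm k - D / 2"
      using norm[OF jk(1,2)] by simp
    then have "?E k \<subseteq> ?far j k" by (auto simp: abs_if)
    then have "bern_prob n (u j) (?E k) \<le> bern_prob n (u j) (?far j k)"
      by (intro bern_prob_mono[OF u[OF jk(1)]]) auto
    also have "\<dots> \<le> 4 * real n / D\<^sup>2" by (rule far[OF jk(1,2)])
    also have "\<dots> \<le> l2" using l2 \<open>D > 0\<close> by (simp add: divide_le_eq)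
    finally show ?thesis .
  qed
  show ?thesis
    unfolding is_DI_code_def using u own cross by auto
qed

lemma DI_code_exists:
  fixes n m h :: nat
  assumes "1 \<le> m" "1 \<le> h"
    and l1: "4 * real n * real m ^ 4 \<le> l1 * (real h)\<^sup>2" and l2: "4 * real n * real m ^ 4 \<le> l2 * (real h)\<^sup>2"
  shows "\<exists>N u E. is_DI_code n N l1 l2 u E \<and> (m + 1) ^ n \<le> N * (2 ^ n * (m + 1) ^ h) * (n * m\<^sup>2 + 1)"
proof -
  obtain C where C: "C \<subseteq> PiE {..<n} (\<lambda>_. {..m})"
    and dist: "\<And>v w. v \<in> C \<Longrightarrow> w \<in> C \<Longrightarrow> v \<noteq> w \<Longrightarrow> h \<le> hamming n v w"
    and norm: "\<And>v w. v \<in> C \<Longrightarrow> w \<in> C \<Longrightarrow> (\<Sum>i<n. (v i)\<^sup>2) = (\<Sum>i<n. (w i)\<^sup>2)"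
    and count: "(m + 1) ^ n \<le> card C * (2 ^ n * (m + 1) ^ h) * (n * m\<^sup>2 + 1)"
    using exists_equal_norm_hamming_code[OF \<open>1 \<le> h\<close>] by blast
  obtain g where g: "bij_betw g {0..<card C} C"
    using ex_bij_betw_nat_finite finite_subset[OF C] by (auto simp: finite_PiE)
  have gC: "g j \<in> C" and g_inj: "k < card C \<Longrightarrow> j \<noteq> k \<Longrightarrow> g j \<noteq> g k" if "j < card C" for j k
    using bij_betw_apply[OF g] inj_on_contraD[OF bij_betw_imp_inj_on[OF g]] that by auto
  define u where "u j i = real (g j i) / real m" for j i
  have m: "real m > 0" using \<open>1 \<le> m\<close> by simp
  have "is_DI_code n (card C) l1 l2 u
          (\<lambda>j. {y\<in>words n. (\<Sum>i<n. (u j i)\<^sup>2) - real h / (real m)\<^sup>2 / 4 \<le> dot_word (u j) n y})"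
  proof (rule threshold_DI_code)
    fix j assume "j < card C"
    then have "g j i \<le> m" if "i < n" for i
      using gC C that by (auto simp: PiE_iff)
    then show "\<forall>i<n. 0 \<le> u j i \<and> u j i \<le> 1" using m by (simp add: u_def)
  next
    fix j k assume "j < card C" "k < card C"
    then have "real (\<Sum>i<n. (g j i)\<^sup>2) = real (\<Sum>i<n. (g k i)\<^sup>2)" using norm gC by metis
    then have "(\<Sum>i<n. (real (g j i))\<^sup>2) = (\<Sum>i<n. (real (g k i))\<^sup>2)" by simp
    then show "(\<Sum>i<n. (u j i)\<^sup>2) = (\<Sum>i<n. (u k i)\<^sup>2)"
      by (simp add: u_def power_divide flip: sum_divide_distrib)
  next
    fix j k assume jk: "j < card C" "k < card C" "j \<noteq> k"
    then have "h \<le> hamming n (g j) (g k)" using dist gC g_inj by blast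
    then have "real h \<le> (\<Sum>i<n. (real (g j i) - real (g k i))\<^sup>2)"
      using hamming_le_sum_sq_diff[of n "g j" "g k"] by linarith
    also have "\<dots> = (\<Sum>i<n. (u j i - u k i)\<^sup>2) * (real m)\<^sup>2"
      using m by (simp add: u_def power_divide sum_distrib_right flip: diff_divide_distrib)
    finally show "real h / (real m)\<^sup>2 \<le> (\<Sum>i<n. (u j i - u k i)\<^sup>2)"
      using m by (simp add: divide_le_eq)
  next
    have sq: "(real h / (real m)\<^sup>2)\<^sup>2 = (real h)\<^sup>2 / real m ^ 4"
      by (simp add: power_divide flip: power_mult)
    show "real h / (real m)\<^sup>2 > 0" using \<open>1 \<le> h\<close> m by simp
    show "4 * real n \<le> l1 * (real h / (real m)\<^sup>2)\<^sup>2" "4 * real n \<le> l2 * (real h / (real m)\<^sup>2)\<^sup>2"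
      unfolding sq using l1 l2 m by (simp_all add: field_simps)
  qed
  then show ?thesis using count by blast
qed

lemma log_card_ge_of_count:
  fixes N n m h :: nat
  assumes "1 \<le> m" "1 \<le> n" and count: "(m + 1) ^ n \<le> N * (2 ^ n * (m + 1) ^ h) * (n * m\<^sup>2 + 1)"
  shows "1 \<le> N"
    and "(real n - real h - 2) * log 2 (real m + 1) - real n - log 2 (real n) \<le> log 2 (real N)"
proof -
  show N: "1 \<le> N" using count by (cases N) auto
  define q where "q = real m + 1"
  have q: "2 \<le> q" using \<open>1 \<le> m\<close> by (simp add: q_def)
  have n: "1 \<le> real n" using \<open>1 \<le> n\<close> by simp
  have "q ^ n \<le> real N * (2 ^ n * q ^ h) * (real n * (real m)\<^sup>2 + 1)"
    using count unfolding q_def by (metis (mono_tags) of_nat_1 of_nat_add of_nat_le_iff of_nat_mult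
        of_nat_numeral of_nat_power)
  also have "real n * (real m)\<^sup>2 + 1 \<le> real n * q\<^sup>2"
  proof -
    have "(real m)\<^sup>2 + 1 \<le> q\<^sup>2" by (simp add: q_def power2_eq_square algebra_simps)
    then have "real n * ((real m)\<^sup>2 + 1) \<le> real n * q\<^sup>2" by (intro mult_left_mono) auto
    then show ?thesis using n by (simp add: algebra_simps)
  qed
  finally have "q ^ n \<le> real N * (2 ^ n * q ^ h) * (real n * q\<^sup>2)"
    using N q by (simp add: mult_left_mono)
  then have "log 2 (q ^ n) \<le> log 2 (real N * (2 ^ n * q ^ h) * (real n * q\<^sup>2))"
    using N q n by (subst log_le_cancel_iff) auto
  then have "real n * log 2 q \<le> log 2 (real N) + real n + real h * log 2 q + log 2 (real n) + 2 * log 2 q"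
    using N q n by (simp add: log_mult log_nat_power)
  then show "(real n - real h - 2) * log 2 (real m + 1) - real n - log 2 (real n) \<le> log 2 (real N)"
    by (simp add: q_def algebra_simps)
qed

lemma N_DI_le_enat:
  assumes "\<And>N u E. is_DI_code n N l1 l2 u E \<Longrightarrow> N \<le> B"
  shows "N_DI n l1 l2 \<le> enat B"
  unfolding N_DI_def by (rule Sup_least) (use assms in auto)

lemma enat_le_N_DI: "is_DI_code n N l1 l2 u E \<Longrightarrow> enat N \<le> N_DI n l1 l2"
  unfolding N_DI_def by (rule Sup_upper) blast

lemma DI_rate_le:
  assumes "2 \<le> n" "N_DI n l1 l2 \<le> enat B" "1 \<le> B"
  shows "DI_rate l1 l2 n \<le> ereal (log 2 (real B) / (real n * log 2 (real n)))"
proof -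
  obtain M where M: "N_DI n l1 l2 = enat M" "M \<le> B"
    using assms(2) by (cases "N_DI n l1 l2") auto
  have "log 2 (real M) \<le> log 2 (real B)"
  proof (cases "M = 0")
    case True
    have "log 2 0 = 0" by (simp add: log_def)
    then show ?thesis using True \<open>1 \<le> B\<close> by simp
  next
    case False
    then show ?thesis using M(2) by simp
  qed
  then show ?thesis
    using \<open>2 \<le> n\<close> by (simp add: DI_rate_def M(1) divide_right_mono)
qed

lemma DI_rate_ge:
  assumes "2 \<le> n" "enat N \<le> N_DI n l1 l2" "1 \<le> N"
  shows "ereal (log 2 (real N) / (real n * log 2 (real n))) \<le> DI_rate l1 l2 n"
proof (cases "N_DI n l1 l2")
  case (enat M)
  then have "log 2 (real N) \<le> log 2 (real M)" using assms(2,3) by simp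
  then show ?thesis
    using \<open>2 \<le> n\<close> by (simp add: DI_rate_def enat divide_right_mono)
qed (simp add: DI_rate_def)

lemma N_DI_le_power:
  assumes "l1 + l2 < 1"
  shows "N_DI n l1 l2 \<le> enat ((nat \<lceil>pi / (1 - l1 - l2) * sqrt (real n)\<rceil> + 2) ^ n)"
proof (rule N_DI_le_enat)
  fix N u E assume code: "is_DI_code n N l1 l2 u E"
  define K where "K = nat \<lceil>pi / (1 - l1 - l2) * sqrt (real n)\<rceil> + 1"
  have d: "0 < 1 - l1 - l2" using assms by simp
  have "pi / (1 - l1 - l2) * sqrt (real n) < real K"
    unfolding K_def by linarith
  then have "pi * sqrt (real n) < (1 - l1 - l2) * real K"
    using d by (simp add: field_simps)
  then have "(pi * sqrt (real n))\<^sup>2 < ((1 - l1 - l2) * real K)\<^sup>2"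
    by (intro power_strict_mono) auto
  then have "real n * pi\<^sup>2 < (1 - l1 - l2)\<^sup>2 * (real K)\<^sup>2"
    by (simp add: power_mult_distrib mult.commute)
  then have "N \<le> (K + 1) ^ n"
    using DI_code_card_le[OF code assms] by (simp add: K_def)
  then show "N \<le> (nat \<lceil>pi / (1 - l1 - l2) * sqrt (real n)\<rceil> + 2) ^ n"
    by (simp add: K_def)
qed

lemma limsup_DI_rate_le:
  assumes "l1 + l2 < 1"
  shows "limsup (DI_rate l1 l2) \<le> ereal (1 / 2)"
proof -
  define c where "c = pi / (1 - l1 - l2)"
  have c: "c > 0" using assms by (simp add: c_def)
  define g where "g x = log 2 (c * sqrt x + 3) / log 2 x" for x :: real
  have "(g \<longlongrightarrow> 1 / 2) at_top"
    unfolding g_def using c by real_asymp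
  then have lim: "((\<lambda>n. ereal (g (real n))) \<longlongrightarrow> ereal (1 / 2)) sequentially"
    by (intro tendsto_ereal filterlim_compose[OF _ filterlim_real_sequentially])
  have "eventually (\<lambda>n. DI_rate l1 l2 n \<le> ereal (g (real n))) sequentially"
    using eventually_ge_at_top[of 2]
  proof eventually_elim
    case (elim n)
    define B where "B = nat \<lceil>c * sqrt (real n)\<rceil> + 2"
    have B: "real B \<le> c * sqrt (real n) + 3"
      using c unfolding B_def by simp linarith
    have "DI_rate l1 l2 n \<le> ereal (log 2 (real (B ^ n)) / (real n * log 2 (real n)))"
      using DI_rate_le[OF elim N_DI_le_power[OF assms]] by (simp add: B_def c_def)
    also have "log 2 (real (B ^ n)) / (real n * log 2 (real n)) = log 2 (real B) / log 2 (real n)"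
      using elim by (simp add: B_def log_nat_power)
    also have "\<dots> \<le> g (real n)"
    proof -
      have "0 < real B" by (simp add: B_def)
      then have "log 2 (real B) \<le> log 2 (c * sqrt (real n) + 3)"
        using B by (subst log_le_cancel_iff) auto
      then show ?thesis unfolding g_def using elim by (simp add: divide_right_mono)
    qed
    finally show ?case by simp
  qed
  then have "limsup (DI_rate l1 l2) \<le> limsup (\<lambda>n. ereal (g (real n)))"
    by (rule Limsup_mono)
  also have "\<dots> = ereal (1 / 2)"
    by (rule lim_imp_Limsup[OF trivial_limit_sequentially lim])
  finally show ?thesis .
qed

lemma exists_DI_code_log_card_ge:
  assumes l: "0 < l" "l \<le> l1" "l \<le> l2" and "1 \<le> x" "1 \<le> n"
    and n: "2 / sqrt l * x\<^sup>2 * sqrt (real n) + 3 \<le> real n"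
  obtains N u E where "is_DI_code n N l1 l2 u E" and "1 \<le> N"
    and "(real n - 2 / sqrt l * x\<^sup>2 * sqrt (real n) - 3) * log 2 x - real n - log 2 (real n)
           \<le> log 2 (real N)"
proof -
  define m where "m = nat \<lfloor>x\<rfloor>"
  have m: "1 \<le> m" "real m \<le> x" "x \<le> real m + 1"
    using \<open>1 \<le> x\<close> by (auto simp: m_def le_nat_floor)
  \<comment> \<open>chosen so that the Chebyshev bound \<open>4 n m\<^sup>4 / h\<^sup>2\<close> is at most \<open>l\<close>\<close>
  define r where "r = 2 / sqrt l * (real m)\<^sup>2 * sqrt (real n)"
  define h where "h = nat \<lceil>r\<rceil>"
  have r: "0 < r" using m l \<open>1 \<le> n\<close> by (simp add: r_def)
  have h: "r \<le> real h" "real h \<le> 2 / sqrt l * x\<^sup>2 * sqrt (real n) + 1"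
  proof -
    show "r \<le> real h" unfolding h_def by linarith
    have "r \<le> 2 / sqrt l * x\<^sup>2 * sqrt (real n)"
      unfolding r_def using m l by (intro mult_right_mono mult_left_mono power_mono) auto
    then show "real h \<le> 2 / sqrt l * x\<^sup>2 * sqrt (real n) + 1"
      unfolding h_def using r by linarith
  qed
  have "1 \<le> h" using h r by linarith
  have "4 * real n * real m ^ 4 = l * r\<^sup>2"
    using l by (simp add: r_def field_simps flip: power_mult)
  also have "\<dots> \<le> l * (real h)\<^sup>2"
    using h r l by (intro mult_left_mono power_mono) auto
  finally have key: "4 * real n * real m ^ 4 \<le> l * (real h)\<^sup>2" .
  obtain N u E where code: "is_DI_code n N l1 l2 u E"
    and count: "(m + 1) ^ n \<le> N * (2 ^ n * (m + 1) ^ h) * (n * m\<^sup>2 + 1)"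
    using DI_code_exists[OF \<open>1 \<le> m\<close> \<open>1 \<le> h\<close>]
      order_trans[OF key mult_right_mono[OF l(2)]] order_trans[OF key mult_right_mono[OF l(3)]]
    by fastforce
  have "(real n - 2 / sqrt l * x\<^sup>2 * sqrt (real n) - 3) * log 2 x
      \<le> (real n - real h - 2) * log 2 (real m + 1)"
    using h n m \<open>1 \<le> x\<close> by (intro mult_mono) auto
  then show ?thesis
    using that[OF code] log_card_ge_of_count[OF \<open>1 \<le> m\<close> \<open>1 \<le> n\<close> count] by linarith
qed

lemma DI_rate_ge_scale:
  assumes "0 < l" "l \<le> l1" "l \<le> l2" and "1 \<le> x" "2 \<le> n"
    and "2 / sqrt l * x\<^sup>2 * sqrt (real n) + 3 \<le> real n"
  shows "ereal (((real n - 2 / sqrt l * x\<^sup>2 * sqrt (real n) - 3) * log 2 x - real n - log 2 (real n))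
                / (real n * log 2 (real n))) \<le> DI_rate l1 l2 n"
proof -
  obtain N u E where code: "is_DI_code n N l1 l2 u E" and "1 \<le> N"
    and log_N: "(real n - 2 / sqrt l * x\<^sup>2 * sqrt (real n) - 3) * log 2 x - real n - log 2 (real n)
                  \<le> log 2 (real N)"
    using exists_DI_code_log_card_ge[of l l1 l2 x n] assms by auto
  have "ereal (((real n - 2 / sqrt l * x\<^sup>2 * sqrt (real n) - 3) * log 2 x - real n - log 2 (real n))
                / (real n * log 2 (real n))) \<le> ereal (log 2 (real N) / (real n * log 2 (real n)))"
    using log_N \<open>2 \<le> n\<close> by (simp add: divide_right_mono)
  also have "\<dots> \<le> DI_rate l1 l2 n"
    by (rule DI_rate_ge[OF \<open>2 \<le> n\<close> enat_le_N_DI[OF code] \<open>1 \<le> N\<close>])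
  finally show ?thesis .
qed

lemma liminf_DI_rate_ge:
  assumes "l1 > 0" "l2 > 0"
  shows "ereal (1 / 4) \<le> liminf (DI_rate l1 l2)"
proof -
  define l where "l = min l1 l2"
  have l: "0 < l" "l \<le> l1" "l \<le> l2" using assms by (auto simp: l_def)
  define c where "c = 2 / sqrt l"
  have c: "c > 0" using l by (simp add: c_def)
  \<comment> \<open>with this scale \<open>h\<close> is \<open>O(n / ln\<^sup>2 n)\<close> while \<open>log x0 n \<sim> (log n) / 4\<close>\<close>
  define x0 where "x0 x = x powr (1 / 4) / ln x" for x :: real
  define f where "f x = ((x - c * (x0 x)\<^sup>2 * sqrt x - 3) * log 2 (x0 x) - x - log 2 x) / (x * log 2 x)"
    for x :: real
  have "(f \<longlongrightarrow> 1 / 4) at_top"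
    unfolding f_def x0_def using c by real_asymp
  then have lim: "((\<lambda>n. ereal (f (real n))) \<longlongrightarrow> ereal (1 / 4)) sequentially"
    by (intro tendsto_ereal filterlim_compose[OF _ filterlim_real_sequentially])
  have "eventually (\<lambda>x. 1 \<le> x0 x) at_top"
    unfolding x0_def by real_asymp
  moreover have "eventually (\<lambda>x. c * (x0 x)\<^sup>2 * sqrt x + 3 \<le> x) at_top"
    unfolding x0_def using c by real_asymp
  ultimately have "eventually (\<lambda>n. 1 \<le> x0 (real n) \<and> c * (x0 (real n))\<^sup>2 * sqrt (real n) + 3 \<le> real n)
      sequentially"
    by (intro eventually_compose_filterlim[OF _ filterlim_real_sequentially] eventually_conj)
  then have "eventually (\<lambda>n. ereal (f (real n)) \<le> DI_rate l1 l2 n) sequentially"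
    using eventually_ge_at_top[of 2]
  proof eventually_elim
    case (elim n)
    then show ?case
      using DI_rate_ge_scale[OF l, of "x0 (real n)" n] by (simp add: f_def c_def)
  qed
  then have "liminf (\<lambda>n. ereal (f (real n))) \<le> liminf (DI_rate l1 l2)"
    by (rule Liminf_mono)
  moreover have "liminf (\<lambda>n. ereal (f (real n))) = ereal (1 / 4)"
    by (rule lim_imp_Liminf[OF trivial_limit_sequentially lim])
  ultimately show ?thesis by simp
qed

theorem theorem4:
  fixes l1 l2 :: real
  assumes "l1 > 0" and "l2 > 0" and "l1 + l2 < 1"
  shows "ereal (1/4) \<le> C_DI_dot \<and> C_DI_dot \<le> limsup (DI_rate l1 l2)
         \<and> limsup (DI_rate l1 l2) \<le> ereal (1/2)"
proof (intro conjI)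
  show "ereal (1/4) \<le> C_DI_dot"
    unfolding C_DI_dot_def by (intro INF_greatest) (simp add: liminf_DI_rate_ge)
  have "C_DI_dot \<le> liminf (DI_rate l1 l2)"
    unfolding C_DI_dot_def using assms by (intro INF_lower2[of l1] INF_lower) auto
  also have "\<dots> \<le> limsup (DI_rate l1 l2)"
    by (rule Liminf_le_Limsup) simp
  finally show "C_DI_dot \<le> limsup (DI_rate l1 l2)" .
  show "limsup (DI_rate l1 l2) \<le> ereal (1/2)"
    using limsup_DI_rate_le[OF assms(3)] by simp
qed

end
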